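(* Let $\gamma_1,\dots,\gamma_u$ be real numbers, let $k_1<k_2<\cdots<k_t$ be positive integers, put $\underline{k}=\{k_1,\dots,k_t\}$, and let $m_0$ be a positive integer. Consider the pairs $(k,m)$ with $k\in\underline{k}$ and integers $m\ge m_0$, ordered as $(k_1,m_0),\dots,(k_t,m_0),(k_1,m_0+1),\dots,(k_t,m_0+1),(k_1,m_0+2),\dots$. Assume that for each such pair $(k,m)$ there exist a linear form $r(k,m)=h_0+\sum_{i=1}^u h_i\gamma_i$ with $h_i=h_i(k,m)\in\mathbb{Z}$ and a positive integer $Q_{k,m}$ such that \begin{align*} &c_1(k)Q_{k,m}\le\max_{1\le i\le u}|h_i|\le c_2(k)Q_{k,m},\\ &Q_{k_j,m}<Q_{k_{j+1},m}\le C_1(\underline{k})Q_{k_j,m}^{\theta(j)},\quad j=1,\dots,t-1,\\ &Q_{k_t,m}<Q_{k_1,m+1}\le C_1(\underline{k})Q_{k_t,m}^{\theta(t)},\\ &c_3(k)Q_{k,m}^{-\alpha(k)}\le|r(k,m)|\le c_4(k)Q_{k,m}^{-\beta(k)}, \end{align*} where $c_i(k)$ and $C_1(\underline{k})$ are positive constants depending only on $k$ and on $\underline{k}$ respectively, and $\theta(j)\ge1$, $\alpha(k_j)\ge\beta(k_j)>0$ are constants, all independent of $m$. Then there exist positive constants $Q_0=Q_0(\underline{k},m_0)$ and $C=C(\underline{k},m_0)$ such that for all rational numbers $p_1/q,\dots,p_u/q$ (with $p_i\in\mathbb{Z}$, $q\in\mathbb{Z}$) with $q\ge Q_0$, \[\max_{1\le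 i\le u}\left|\gamma_i-\frac{p_i}{q}\right|>Cq^{-\mu},\qquad\text{where }\mu=\max_{1\le j\le t}\theta(j)\frac{\alpha(k_{j+1})+1}{\beta(k_j)}\text{ and }\alpha(k_{t+1}):=\alpha(k_1).\] *)

theory Defs
  imports Complex_Main
begin

definition linform :: "nat \<Rightarrow> (nat \<Rightarrow> real) \<Rightarrow> (nat \<Rightarrow> int) \<Rightarrow> real" where
  "linform u \<gamma> h = real_of_int (h 0) + (\<Sum>i=1..u. real_of_int (h i) * \<gamma> i)"

definition nxt :: "nat \<Rightarrow> nat \<Rightarrow> nat" where
  "nxt t j = (if j = t then 1 else j + 1)"

end

theory Submission
  imports Defs
begin

text \<open>Run through the pairs (k, m) in the given order as one sequence of linear forms r_n with
  sizes Q_n. For a given q, take the first n with q |r_n| \<le> 1/2. Then q r_n is not close to any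
  nonzero integer, so the integer q h_0 + \<Sum> h_i p_i is either far from q r_n or zero; in both
  cases max |\<gamma>_i - p_i/q| is bounded below in terms of Q_n and q. Minimality of n bounds Q_(n-1)
  by a power of q, and the growth condition transfers this bound to Q_n.\<close>

lemma approx_error_ge_linform:
  fixes \<gamma> :: "nat \<Rightarrow> real" and h p :: "nat \<Rightarrow> int" and q :: int and B L :: real
  assumes u: "u \<ge> 1" and q: "q > 0" and B: "B > 0"
    and h_le: "\<forall>i\<in>{1..u}. real_of_int \<bar>h i\<bar> \<le> B"
    and linform_ge: "L \<le> \<bar>linform u \<gamma> h\<bar>"
    and linform_small: "real_of_int q * \<bar>linform u \<gamma> h\<bar> \<le> 1/2"
  shows "min (1 / (2 * real u * B * real_of_int q)) (L / (real u * B))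
           \<le> Max ((\<lambda>i. \<bar>\<gamma> i - real_of_int (p i) / real_of_int q\<bar>) ` {1..u})"
proof -
  define \<delta> where "\<delta> = Max ((\<lambda>i. \<bar>\<gamma> i - real_of_int (p i) / real_of_int q\<bar>) ` {1..u})"
  define N where "N = h 0 * q + (\<Sum>i=1..u. h i * p i)"
  have qr: "real_of_int q > 0" using q by simp
  have term_le: "\<bar>real_of_int (h i) * (real_of_int q * \<gamma> i - real_of_int (p i))\<bar> \<le> B * (real_of_int q * \<delta>)"
    if i: "i \<in> {1..u}" for i
  proof -
    have "\<bar>real_of_int q * \<gamma> i - real_of_int (p i)\<bar> = real_of_int q * \<bar>\<gamma> i - real_of_int (p i) / real_of_int q\<bar>"
      using qr by (simp add: field_simps abs_mult[symmetric])
    also have "\<dots> \<le> real_of_int q * \<delta>"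
      using i qr unfolding \<delta>_def by (intro mult_left_mono Max_ge) auto
    finally show ?thesis
      unfolding abs_mult using h_le i by (intro mult_mono) auto
  qed
  have "real_of_int q * linform u \<gamma> h - real_of_int N
          = (\<Sum>i=1..u. real_of_int (h i) * (real_of_int q * \<gamma> i - real_of_int (p i)))"
    unfolding linform_def N_def by (simp add: algebra_simps sum_distrib_left sum_subtractf)
  then have "\<bar>real_of_int q * linform u \<gamma> h - real_of_int N\<bar>
               \<le> (\<Sum>i=1..u. \<bar>real_of_int (h i) * (real_of_int q * \<gamma> i - real_of_int (p i))\<bar>)"
    by (simp only: sum_abs)
  also have "\<dots> \<le> (\<Sum>i=1..u. B * (real_of_int q * \<delta>))"
    by (intro sum_mono term_le)
  finally have dist_le: "\<bar>real_of_int q * linform u \<gamma> h - real_of_int N\<bar> \<le> real u * B * real_of_int q * \<delta>"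
    by simp
  have uB: "real u * B > 0" using u B by simp
  show ?thesis
  proof (cases "N = 0")
    case True
    then have "real_of_int q * L \<le> real_of_int q * (real u * B * \<delta>)"
      using dist_le linform_ge qr by (simp add: abs_mult mult_ac)
    then have "L / (real u * B) \<le> \<delta>"
      using qr uB by (simp add: divide_simps mult_ac)
    then show ?thesis unfolding \<delta>_def by simp
  next
    case False
    then have "1 \<le> \<bar>real_of_int N\<bar>" by linarith
    moreover have "\<bar>real_of_int q * linform u \<gamma> h\<bar> \<le> 1/2"
      using linform_small qr by (simp add: abs_mult)
    ultimately have "1/2 \<le> \<bar>real_of_int q * linform u \<gamma> h - real_of_int N\<bar>"
      by linarith
    then have "1 \<le> 2 * real u * B * real_of_int q * \<delta>"
      using dist_le by linarith
    moreover have "0 < 2 * real u * B * real_of_int q" using u B qr by simp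
    ultimately have "1 / (2 * real u * B * real_of_int q) \<le> \<delta>"
      by (simp add: divide_le_eq mult.commute)
    then show ?thesis unfolding \<delta>_def by simp
  qed
qed

lemma le_powr_if_remainder_not_small:
  fixes q c b \<theta> x y C :: real
  assumes x: "0 < x" and b: "0 < b" and \<theta>: "0 \<le> \<theta>" and C: "0 \<le> C"
    and not_small: "1/2 < q * c * x powr (- b)"
    and y_le: "y \<le> C * x powr \<theta>"
  shows "y \<le> C * (2 * c * q) powr (\<theta> / b)"
proof -
  have "x powr b < 2 * c * q"
    using not_small x by (simp add: powr_minus_divide divide_simps mult_ac)
  then have "(x powr b) powr (1 / b) \<le> (2 * c * q) powr (1 / b)"
    using b by (intro powr_mono2) auto
  then have "x \<le> (2 * c * q) powr (1 / b)"
    using x b by (simp add: powr_powr)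
  then have "x powr \<theta> \<le> ((2 * c * q) powr (1 / b)) powr \<theta>"
    using x \<theta> by (intro powr_mono2) auto
  also have "\<dots> = (2 * c * q) powr (\<theta> / b)"
    by (simp add: powr_powr)
  finally show ?thesis
    using y_le C by (meson mult_left_mono order_trans)
qed

lemma liouville_bound_ge_powr:
  fixes q Y K e \<alpha> \<mu> c2 c3 u :: real
  assumes q: "q \<ge> 1" and Y: "Y > 0" and K: "K > 0" and Y_le: "Y \<le> K * q powr e" and e: "e \<ge> 0"
    and \<alpha>: "\<alpha> \<ge> 0" and \<mu>1: "e + 1 \<le> \<mu>" and \<mu>2: "e * (\<alpha> + 1) \<le> \<mu>"
    and c2: "c2 > 0" and c3: "c3 > 0" and u: "u > 0"
  shows "min (1 / (2 * u * c2 * K)) (c3 * K powr (- (\<alpha> + 1)) / (u * c2)) * q powr (- \<mu>)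
           \<le> min (1 / (2 * u * (c2 * Y) * q)) (c3 * Y powr (- \<alpha>) / (u * (c2 * Y)))"
proof -
  have qp: "q > 0" using q by simp
  have first: "1 / (2 * u * c2 * K) * q powr (- \<mu>) \<le> 1 / (2 * u * (c2 * Y) * q)"
  proof -
    have "1 / (2 * u * c2 * K) * q powr (- \<mu>) \<le> 1 / (2 * u * c2 * K) * q powr (- (e + 1))"
      using q \<mu>1 u c2 K by (intro mult_left_mono powr_mono) auto
    also have "\<dots> = 1 / (2 * u * c2 * (K * q powr e) * q)"
    proof -
      have "q powr (- (e + 1)) = 1 / q powr (e + 1)"
        by (rule powr_minus_divide)
      also have "q powr (e + 1) = q powr e * q"
        using qp by (simp add: powr_add)
      finally show ?thesis by simp
    qed
    also have "\<dots> \<le> 1 / (2 * u * (c2 * Y) * q)"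
      using Y_le Y K u c2 qp by (intro divide_left_mono mult_right_mono mult_left_mono mult_pos_pos) auto
    finally show ?thesis .
  qed
  have second: "c3 * K powr (- (\<alpha> + 1)) / (u * c2) * q powr (- \<mu>) \<le> c3 * Y powr (- \<alpha>) / (u * (c2 * Y))"
  proof -
    have "c3 * K powr (- (\<alpha> + 1)) / (u * c2) * q powr (- \<mu>)
            \<le> c3 * K powr (- (\<alpha> + 1)) / (u * c2) * q powr (e * (- (\<alpha> + 1)))"
      using q \<mu>2 u c2 K c3 by (intro mult_left_mono powr_mono) (auto simp: algebra_simps)
    also have "\<dots> = c3 / (u * c2) * (K * q powr e) powr (- (\<alpha> + 1))"
      using qp K by (simp add: powr_mult powr_powr)
    also have "\<dots> \<le> c3 / (u * c2) * Y powr (- (\<alpha> + 1))"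
      using Y_le Y \<alpha> u c2 c3 by (intro mult_left_mono powr_mono2') auto
    also have "\<dots> = c3 * Y powr (- \<alpha>) / (u * (c2 * Y))"
    proof -
      have "Y powr (- (\<alpha> + 1)) = Y powr (- \<alpha>) * Y powr (- 1)"
        using powr_add[of Y "- \<alpha>" "- 1"] by (simp add: algebra_simps)
      also have "Y powr (- 1) = 1 / Y"
        using Y by (simp add: powr_minus_divide)
      finally show ?thesis by simp
    qed
    finally show ?thesis .
  qed
  have "0 \<le> q powr (- \<mu>)" by simp
  then show ?thesis
    using first second by (auto simp: min_mult_distrib_right intro: min.mono)
qed

text \<open>The n-th linear form H n of the sequence has size X n; J n is its type index and \<sigma> gives the
  type index of the next form.\<close>
locale linear_form_approximations =
  fixes u :: nat and \<gamma> :: "nat \<Rightarrow> real" and H :: "nat \<Rightarrow> nat \<Rightarrow> int" and X :: "nat \<Rightarrow> real"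
    and J \<sigma> :: "nat \<Rightarrow> nat" and S :: "nat set"
    and c2 c3 c4 \<alpha> \<beta> \<theta> :: "nat \<Rightarrow> real" and C1 :: real
  assumes u_pos: "u \<ge> 1"
    and finite_S: "finite S"
    and J_in_S: "J n \<in> S"
    and \<sigma>_in_S: "j \<in> S \<Longrightarrow> \<sigma> j \<in> S"
    and J_Suc: "J (Suc n) = \<sigma> (J n)"
    and c2_pos: "j \<in> S \<Longrightarrow> c2 j > 0"
    and c3_pos: "j \<in> S \<Longrightarrow> c3 j > 0"
    and c4_pos: "j \<in> S \<Longrightarrow> c4 j > 0"
    and \<beta>_pos: "j \<in> S \<Longrightarrow> \<beta> j > 0"
    and \<beta>_le_\<alpha>: "j \<in> S \<Longrightarrow> \<beta> j \<le> \<alpha> j"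
    and \<theta>_ge_1: "j \<in> S \<Longrightarrow> \<theta> j \<ge> 1"
    and C1_pos: "C1 > 0"
    and X_pos: "X n > 0"
    and X_tendsto: "filterlim X at_top sequentially"
    and X_Suc_le: "X (Suc n) \<le> C1 * X n powr \<theta> (J n)"
    and H_le: "i \<in> {1..u} \<Longrightarrow> real_of_int \<bar>H n i\<bar> \<le> c2 (J n) * X n"
    and linform_ge: "c3 (J n) * X n powr (- \<alpha> (J n)) \<le> \<bar>linform u \<gamma> (H n)\<bar>"
    and linform_le: "\<bar>linform u \<gamma> (H n)\<bar> \<le> c4 (J n) * X n powr (- \<beta> (J n))"
begin

definition approx_exponent :: real where
  "approx_exponent = (MAX j\<in>S. \<theta> j * (\<alpha> (\<sigma> j) + 1) / \<beta> j)"

definition growth_const :: "nat \<Rightarrow> real" where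
  "growth_const j = C1 * (2 * c4 j) powr (\<theta> j / \<beta> j)"

definition approx_const :: "nat \<Rightarrow> real" where
  "approx_const j = min (1 / (2 * real u * c2 (\<sigma> j) * growth_const j))
     (c3 (\<sigma> j) * growth_const j powr (- (\<alpha> (\<sigma> j) + 1)) / (real u * c2 (\<sigma> j)))"

lemma approx_exponent_ge_term: "j \<in> S \<Longrightarrow> \<theta> j / \<beta> j * (\<alpha> (\<sigma> j) + 1) \<le> approx_exponent"
  unfolding approx_exponent_def using finite_S by (intro Max_ge) auto

text \<open>For i maximizing \<theta> i / \<beta> i we get \<beta> i / \<theta> i \<le> \<beta> (\<sigma> i) / \<theta> (\<sigma> i) \<le> \<alpha> (\<sigma> i),
  so the term of index i is at least \<theta> i / \<beta> i + 1.\<close>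
lemma approx_exponent_ge_ratio_plus_one:
  assumes j: "j \<in> S"
  shows "\<theta> j / \<beta> j + 1 \<le> approx_exponent"
proof -
  have "Max ((\<lambda>l. \<theta> l / \<beta> l) ` S) \<in> (\<lambda>l. \<theta> l / \<beta> l) ` S"
    using finite_S j by (intro Max_in) auto
  then obtain i where i: "i \<in> S" and i_eq: "\<theta> i / \<beta> i = Max ((\<lambda>l. \<theta> l / \<beta> l) ` S)"
    by auto
  have i_max: "\<theta> l / \<beta> l \<le> \<theta> i / \<beta> i" if "l \<in> S" for l
    unfolding i_eq using finite_S that by (intro Max_ge) auto
  define n where "n = \<sigma> i"
  have n: "n \<in> S" unfolding n_def using \<sigma>_in_S[OF i] .
  have pos: "\<beta> i > 0" "\<theta> i \<ge> 1" "\<beta> n > 0" "\<theta> n \<ge> 1"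
    using \<beta>_pos \<theta>_ge_1 i n by auto
  have "\<beta> i / \<theta> i \<le> \<beta> n / \<theta> n"
    using i_max[OF n] pos by (simp add: divide_simps mult.commute)
  also have "\<dots> \<le> \<beta> n" using pos by (simp add: divide_simps)
  also have "\<dots> \<le> \<alpha> n" using \<beta>_le_\<alpha>[OF n] .
  finally have "1 \<le> \<theta> i / \<beta> i * \<alpha> n"
    using pos by (simp add: divide_simps mult.commute)
  moreover have "\<theta> i / \<beta> i * (\<alpha> (\<sigma> i) + 1) = \<theta> i / \<beta> i * \<alpha> n + \<theta> i / \<beta> i"
    unfolding n_def by (simp add: distrib_left)
  ultimately have "\<theta> j / \<beta> j + 1 \<le> \<theta> i / \<beta> i * (\<alpha> (\<sigma> i) + 1)"
    using i_max[OF j] by linarith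
  also have "\<dots> \<le> approx_exponent" using approx_exponent_ge_term[OF i] .
  finally show ?thesis .
qed

lemma remainder_eventually_small:
  fixes q :: real
  assumes q: "q > 0"
  shows "\<forall>\<^sub>F n in sequentially. q * c4 (J n) * X n powr (- \<beta> (J n)) \<le> 1/2"
proof -
  define \<beta>0 where "\<beta>0 = Min (\<beta> ` S)"
  define c4_max where "c4_max = Max (c4 ` S)"
  have \<beta>0_le: "\<beta>0 \<le> \<beta> j" and c4_le: "c4 j \<le> c4_max" if "j \<in> S" for j
    unfolding \<beta>0_def c4_max_def using finite_S that by auto
  have \<beta>0_pos: "\<beta>0 > 0"
    unfolding \<beta>0_def using finite_S J_in_S \<beta>_pos by (subst Min_gr_iff) auto
  have c4_max_pos: "c4_max > 0"
    using c4_le[OF J_in_S] c4_pos[OF J_in_S] by (meson less_le_trans)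
  have "\<forall>\<^sub>F n in sequentially. max 1 ((2 * c4_max * q) powr (1 / \<beta>0)) \<le> X n"
    using X_tendsto filterlim_at_top by blast
  then show ?thesis
  proof (rule eventually_mono)
    fix n
    assume X_ge: "max 1 ((2 * c4_max * q) powr (1 / \<beta>0)) \<le> X n"
    have "2 * c4 (J n) * q \<le> 2 * c4_max * q"
      using c4_le[OF J_in_S] q by simp
    also have "\<dots> = ((2 * c4_max * q) powr (1 / \<beta>0)) powr \<beta>0"
      using \<beta>0_pos c4_max_pos q by (simp add: powr_powr)
    also have "\<dots> \<le> X n powr \<beta>0"
      using X_ge \<beta>0_pos by (intro powr_mono2) auto
    also have "\<dots> \<le> X n powr \<beta> (J n)"
      using X_ge \<beta>0_le[OF J_in_S] by (intro powr_mono) auto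
    finally have "2 * c4 (J n) * q \<le> X n powr \<beta> (J n)" .
    then show "q * c4 (J n) * X n powr (- \<beta> (J n)) \<le> 1/2"
      using X_pos[of n] by (simp add: powr_minus_divide divide_simps mult_ac)
  qed
qed

lemma growth_const_pos: "j \<in> S \<Longrightarrow> growth_const j > 0"
  unfolding growth_const_def using C1_pos c4_pos[of j] by simp

lemma approx_const_pos:
  assumes j: "j \<in> S"
  shows "approx_const j > 0"
proof -
  have "growth_const j > 0" "c2 (\<sigma> j) > 0" "c3 (\<sigma> j) > 0"
    using growth_const_pos c2_pos c3_pos \<sigma>_in_S j by auto
  then show ?thesis
    unfolding approx_const_def using u_pos by (simp add: divide_pos_pos)
qed


lemma approx_error_ge_approx_const:
  fixes p :: "nat \<Rightarrow> int" and q :: int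
  assumes q_ge_1: "1 \<le> real_of_int q"
    and q_ge: "X 0 powr \<beta> (J 0) / c4 (J 0) \<le> real_of_int q"
  shows "\<exists>j\<in>S. approx_const j * real_of_int q powr (- approx_exponent)
                \<le> Max ((\<lambda>i. \<bar>\<gamma> i - real_of_int (p i) / real_of_int q\<bar>) ` {1..u})"
proof -
  define small where
    "small n \<longleftrightarrow> real_of_int q * c4 (J n) * X n powr (- \<beta> (J n)) \<le> 1/2" for n
  have "\<not> small 0"
  proof
    assume "small 0"
    moreover have "1 \<le> real_of_int q * c4 (J 0) * X 0 powr (- \<beta> (J 0))"
      using q_ge c4_pos[OF J_in_S] X_pos[of 0]
      by (simp add: powr_minus_divide divide_simps mult_ac)
    ultimately show False unfolding small_def by linarith
  qed
  moreover obtain N where "small N"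
    using eventually_sequentially remainder_eventually_small[of "real_of_int q"] q_ge_1
    unfolding small_def by fastforce
  ultimately obtain n where not_small: "\<not> small n" and small: "small (Suc n)"
    using ex_least_nat_less[of small N] by blast
  define j where "j = J n"
  have j: "j \<in> S" and \<sigma>j: "\<sigma> j \<in> S" and J_Suc_n: "J (Suc n) = \<sigma> j"
    unfolding j_def using J_in_S \<sigma>_in_S J_Suc by auto
  have "X (Suc n) \<le> C1 * (2 * c4 j * real_of_int q) powr (\<theta> j / \<beta> j)"
    using not_small X_Suc_le[of n] X_pos \<beta>_pos[OF j] \<theta>_ge_1[OF j] C1_pos
    unfolding small_def j_def by (intro le_powr_if_remainder_not_small) auto
  also have "\<dots> = growth_const j * real_of_int q powr (\<theta> j / \<beta> j)"
    unfolding growth_const_def using c4_pos[OF j] q_ge_1 by (simp add: powr_mult)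
  finally have X_Suc_n: "X (Suc n) \<le> growth_const j * real_of_int q powr (\<theta> j / \<beta> j)" .
  have "approx_const j * real_of_int q powr (- approx_exponent)
          \<le> min (1 / (2 * real u * (c2 (\<sigma> j) * X (Suc n)) * real_of_int q))
               (c3 (\<sigma> j) * X (Suc n) powr (- \<alpha> (\<sigma> j)) / (real u * (c2 (\<sigma> j) * X (Suc n))))"
    unfolding approx_const_def
  proof (rule liouville_bound_ge_powr[OF q_ge_1 X_pos growth_const_pos[OF j] X_Suc_n])
    show "0 \<le> \<alpha> (\<sigma> j)" using \<beta>_pos[OF \<sigma>j] \<beta>_le_\<alpha>[OF \<sigma>j] by linarith
    show "0 \<le> \<theta> j / \<beta> j" using \<beta>_pos[OF j] \<theta>_ge_1[OF j] by simp
  qed (use j \<sigma>j \<beta>_pos \<theta>_ge_1 approx_exponent_ge_ratio_plus_one approx_exponent_ge_term c2_pos c3_pos u_pos in auto)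
  also have "\<dots> \<le> Max ((\<lambda>i. \<bar>\<gamma> i - real_of_int (p i) / real_of_int q\<bar>) ` {1..u})"
  proof (rule approx_error_ge_linform[OF u_pos])
    show "\<forall>i\<in>{1..u}. real_of_int \<bar>H (Suc n) i\<bar> \<le> c2 (\<sigma> j) * X (Suc n)"
      using H_le[of _ "Suc n"] J_Suc_n by simp
    show "c3 (\<sigma> j) * X (Suc n) powr (- \<alpha> (\<sigma> j)) \<le> \<bar>linform u \<gamma> (H (Suc n))\<bar>"
      using linform_ge[of "Suc n"] J_Suc_n by simp
    have "real_of_int q * \<bar>linform u \<gamma> (H (Suc n))\<bar>
            \<le> real_of_int q * c4 (J (Suc n)) * X (Suc n) powr (- \<beta> (J (Suc n)))"
      using linform_le[of "Suc n"] q_ge_1 by (simp add: mult.assoc)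
    then show "real_of_int q * \<bar>linform u \<gamma> (H (Suc n))\<bar> \<le> 1/2"
      using small unfolding small_def by linarith
  qed (use q_ge_1 c2_pos[OF \<sigma>j] X_pos in auto)
  finally show ?thesis using j by blast
qed

theorem approx_error_lower_bound:
  "\<exists>Q0 C. Q0 > 0 \<and> C > 0 \<and>
     (\<forall>(p :: nat \<Rightarrow> int) (q :: int). real_of_int q \<ge> Q0 \<longrightarrow>
        Max ((\<lambda>i. \<bar>\<gamma> i - real_of_int (p i) / real_of_int q\<bar>) ` {1..u})
          > C * real_of_int q powr (- approx_exponent))"
proof (intro exI conjI allI impI)
  define C where "C = Min (approx_const ` S)"
  have C_pos: "C > 0"
    unfolding C_def using finite_S J_in_S approx_const_pos by (subst Min_gr_iff) auto
  show "0 < max 1 (X 0 powr \<beta> (J 0) / c4 (J 0))" by simp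
  show "0 < C / 2" using C_pos by simp
  fix p :: "nat \<Rightarrow> int" and q :: int
  assume "max 1 (X 0 powr \<beta> (J 0) / c4 (J 0)) \<le> real_of_int q"
  then obtain j where j: "j \<in> S"
    and approx: "approx_const j * real_of_int q powr (- approx_exponent)
                   \<le> Max ((\<lambda>i. \<bar>\<gamma> i - real_of_int (p i) / real_of_int q\<bar>) ` {1..u})"
    using approx_error_ge_approx_const by auto
  have "C \<le> approx_const j" unfolding C_def using finite_S j by simp
  moreover have "real_of_int q powr (- approx_exponent) > 0"
    using \<open>max 1 _ \<le> real_of_int q\<close> by simp
  ultimately have "C / 2 * real_of_int q powr (- approx_exponent)
                     < approx_const j * real_of_int q powr (- approx_exponent)"
    using C_pos by (intro mult_strict_right_mono) auto
  then show "C / 2 * real_of_int q powr (- approx_exponent)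
               < Max ((\<lambda>i. \<bar>\<gamma> i - real_of_int (p i) / real_of_int q\<bar>) ` {1..u})"
    using approx by linarith
qed

end

text \<open>The n-th pair of the enumeration is (k (cyc_index t n), m0 + n div t).\<close>
definition cyc_index :: "nat \<Rightarrow> nat \<Rightarrow> nat" where
  "cyc_index t n = n mod t + 1"

lemma cyc_index_in: "t \<ge> 1 \<Longrightarrow> cyc_index t n \<in> {1..t}"
  unfolding cyc_index_def by (simp add: Suc_leI)

lemma cyc_index_Suc: "cyc_index t (Suc n) = nxt t (cyc_index t n)"
  unfolding cyc_index_def nxt_def by (simp add: mod_Suc)

lemma cyclic_chain:
  fixes R :: "nat \<Rightarrow> 'a \<Rightarrow> 'a \<Rightarrow> bool" and G :: "nat \<Rightarrow> nat \<Rightarrow> 'a"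
  assumes t: "t \<ge> 1"
    and step: "\<forall>j\<in>{1..<t}. \<forall>m\<ge>m0. R j (G j m) (G (j + 1) m)"
    and wrap: "\<forall>m\<ge>m0. R t (G t m) (G 1 (m + 1))"
  shows "R (cyc_index t n) (G (cyc_index t n) (m0 + n div t))
           (G (cyc_index t (Suc n)) (m0 + Suc n div t))"
proof (cases "Suc (n mod t) = t")
  case True
  then have "cyc_index t n = t" "cyc_index t (Suc n) = 1" "Suc n div t = n div t + 1"
    unfolding cyc_index_def by (auto simp: mod_Suc div_Suc)
  then show ?thesis using wrap by simp
next
  case False
  moreover have "n mod t < t" using t by simp
  ultimately have "cyc_index t (Suc n) = cyc_index t n + 1" "Suc n div t = n div t"
    "cyc_index t n \<in> {1..<t}"
    unfolding cyc_index_def by (auto simp: mod_Suc div_Suc)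
  then show ?thesis using step by simp
qed

theorem lemma1:
  fixes u t m0 :: nat
    and \<gamma> :: "nat \<Rightarrow> real"
    and k :: "nat \<Rightarrow> nat"
    and h :: "nat \<Rightarrow> nat \<Rightarrow> nat \<Rightarrow> int"
    and Q :: "nat \<Rightarrow> nat \<Rightarrow> nat"
    and c1 c2 c3 c4 \<alpha> \<beta> :: "nat \<Rightarrow> real"
    and C1 :: real
    and \<theta> :: "nat \<Rightarrow> real"
  assumes u_pos: "u \<ge> 1"
    and t_pos: "t \<ge> 1"
    and m0_pos: "m0 \<ge> 1"
    and k_pos: "\<forall>j\<in>{1..t}. k j > 0"
    and k_mono: "\<forall>j\<in>{1..<t}. k j < k (j + 1)"
    and consts_pos: "\<forall>j\<in>{1..t}. c1 (k j) > 0 \<and> c2 (k j) > 0 \<and> c3 (k j) > 0 \<and> c4 (k j) > 0"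
    and C1_pos: "C1 > 0"
    and theta_ge: "\<forall>j\<in>{1..t}. \<theta> j \<ge> 1"
    and alpha_beta: "\<forall>j\<in>{1..t}. \<alpha> (k j) \<ge> \<beta> (k j) \<and> \<beta> (k j) > 0"
    and Q_pos: "\<forall>j\<in>{1..t}. \<forall>m\<ge>m0. Q (k j) m > 0"
    and h_size: "\<forall>j\<in>{1..t}. \<forall>m\<ge>m0.
        c1 (k j) * real (Q (k j) m) \<le> Max ((\<lambda>i. real_of_int \<bar>h (k j) m i\<bar>) ` {1..u}) \<and>
        Max ((\<lambda>i. real_of_int \<bar>h (k j) m i\<bar>) ` {1..u}) \<le> c2 (k j) * real (Q (k j) m)"
    and Q_step: "\<forall>j\<in>{1..<t}. \<forall>m\<ge>m0.
        Q (k j) m < Q (k (j + 1)) m \<and>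
        real (Q (k (j + 1)) m) \<le> C1 * real (Q (k j) m) powr \<theta> j"
    and Q_wrap: "\<forall>m\<ge>m0.
        Q (k t) m < Q (k 1) (m + 1) \<and>
        real (Q (k 1) (m + 1)) \<le> C1 * real (Q (k t) m) powr \<theta> t"
    and r_size: "\<forall>j\<in>{1..t}. \<forall>m\<ge>m0.
        c3 (k j) * real (Q (k j) m) powr (- \<alpha> (k j)) \<le> \<bar>linform u \<gamma> (h (k j) m)\<bar> \<and>
        \<bar>linform u \<gamma> (h (k j) m)\<bar> \<le> c4 (k j) * real (Q (k j) m) powr (- \<beta> (k j))"
  shows "\<exists>Q0 C. Q0 > 0 \<and> C > 0 \<and>
    (\<forall>(p :: nat \<Rightarrow> int) (q :: int). real_of_int q \<ge> Q0 \<longrightarrow>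
       Max ((\<lambda>i. \<bar>\<gamma> i - real_of_int (p i) / real_of_int q\<bar>) ` {1..u})
         > C * real_of_int q powr (- (MAX j\<in>{1..t}. \<theta> j * (\<alpha> (k (nxt t j)) + 1) / \<beta> (k j))))"
proof -
  define J where "J = cyc_index t"
  define M where "M n = m0 + n div t" for n
  define Qseq where "Qseq n = Q (k (J n)) (M n)" for n
  have J: "J n \<in> {1..t}" and M: "M n \<ge> m0" for n
    unfolding J_def M_def using cyc_index_in[OF t_pos] by auto
  have Qseq_Suc: "Qseq n < Qseq (Suc n) \<and> real (Qseq (Suc n)) \<le> C1 * real (Qseq n) powr \<theta> (J n)" for n
    using cyclic_chain[where R = "\<lambda>j x y. x < y \<and> real y \<le> C1 * real x powr \<theta> j"
        and G = "\<lambda>j. Q (k j)", OF t_pos] Q_step Q_wrap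
    unfolding Qseq_def J_def M_def by simp
  then have "strict_mono Qseq" by (simp add: strict_mono_Suc_iff)
  then have Qseq_tendsto: "filterlim (\<lambda>n. real (Qseq n)) at_top sequentially"
    by (rule filterlim_compose[OF filterlim_real_sequentially filterlim_subseq])
  have h_le: "real_of_int \<bar>h (k (J n)) (M n) i\<bar> \<le> c2 (k (J n)) * real (Qseq n)" if "i \<in> {1..u}" for n i
    using that h_size J M unfolding Qseq_def by (meson Max_ge finite_atLeastAtMost finite_imageI imageI order_trans)
  interpret linear_form_approximations u \<gamma> "\<lambda>n. h (k (J n)) (M n)" "\<lambda>n. real (Qseq n)" J "nxt t" "{1..t}"
    "\<lambda>j. c2 (k j)" "\<lambda>j. c3 (k j)" "\<lambda>j. c4 (k j)" "\<lambda>j. \<alpha> (k j)" "\<lambda>j. \<beta> (k j)" \<theta> C1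
    by unfold_locales
      (use u_pos J consts_pos alpha_beta theta_ge C1_pos Q_pos M Qseq_Suc Qseq_tendsto h_le r_size
        in \<open>auto simp: J_def cyc_index_Suc nxt_def Qseq_def\<close>)
  show ?thesis using approx_error_lower_bound unfolding approx_exponent_def .
qed

end
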